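(* Let $q\in\Delta_1^m$ be a prior with $q_s>0$ for all $s\in[m]$, and assume $\mathcal{W}^{\theta_1}\neq\mathcal{W}^{\theta_2}$. Then there exists a signalling scheme $\Phi\in\mathbb{R}^{m\times m}$ (column-stochastic, with $m$ signals) that is $q$-identifying, i.e. $\mathcal{Q}_\Phi=\{q\}$.
   Context: Let $\mathcal{G}=(\mathcal{V},\mathcal{E})$ be a finite directed graph with an origin $v_o$ and a destination $v_d$, and let $\mathcal{P}$ be the (finite) set of acyclic directed paths from $v_o$ to $v_d$, $n=|\mathcal{P}|$. The set of feasible path-flows is $\mathcal{H}=\{f\in\mathbb{R}^n_{\ge0}:\sum_{p\in\mathcal{P}}f_p=1\}$. For a path-flow $f$, the flow on edge $e_k$ is $f_{e_k}=\sum_{p\ni e_k}f_p$. There is a finite set of states $\Theta=\{\theta_1,\dots,\theta_m\}$, $m\ge2$; in each state $\theta_s$ each edge $e_k$ has a known cost function $C^{\theta_s}_{e_k}:\mathbb{R}_{\ge0}\to\mathbb{R}_{\ge0}$ that is continuous and strictly increasing. The cost of path $p$ in state $\theta_s$ is $C^{\theta_s}_p(f)=\sum_{e_k\in p}C^{\theta_s}_{e_k}(f_{e_k})$. For $\varphi\in\Delta_1^m:=\{x\in\mathbb{R}^m_{\ge0}:\sum_i x_i=1\}$ the expected cost of path $p$ is $C^\varphi_p(f)=\sum_{s}\varphi_sC^{\theta_s}_p(f)$. A flow $f\in\mathcal{H}$ is a $\varphi$-based Wardrop equilibrium ($\varphi$-WE) if for all $p$ with $f_p>0$ we have $C^\varphi_p(f)\le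 C^\varphi_r(f)$ for all $r\in\mathcal{P}$; $\mathcal{W}^\varphi$ denotes the set of $\varphi$-WE. For each $s$, $\varphi^{\theta_s}$ is the distribution with $\varphi^{\theta_s}_s=1$ and $\mathcal{W}^{\theta_s}:=\mathcal{W}^{\varphi^{\theta_s}}$. A (public) signalling scheme with signals $\zeta^1,\dots,\zeta^z$ is a column-stochastic matrix $\Phi=(\phi^u_s)\in\mathbb{R}^{z\times m}_{\ge0}$, where $\phi^u_s$ is the probability of sending $\zeta^u$ in state $\theta_s$. Given the prior $q$, the posterior after $\zeta^u$ (when $\sum_\ell\phi^u_\ell q_\ell>0$) is $\widetilde q^{\zeta^u}_s=\phi^u_sq_s/\sum_\ell\phi^u_\ell q_\ell$, and the observed flow under $\zeta^u$ is some $\widetilde f^{\zeta^u}\in\mathcal{W}^{\widetilde q^{\zeta^u}}$. The set $\mathcal{Q}_\Phi$ consists of all $\psi\in\Delta_1^m$ such that for every signal $u$ (with $\sum_\ell\phi^u_\ell q_\ell>0$): $\sum_s\phi^u_s(C^{\theta_s}_p(\widetilde f^{\zeta^u})-C^{\theta_s}_r(\widetilde f^{\zeta^u}))\psi_s=0$ for all $p,r$ with $\widetilde f^{\zeta^u}_p,\widetilde f^{\zeta^u}_r>0$, and $\sum_s\phi^u_s(C^{\theta_s}_p(\widetilde f^{\zeta^u})-C^{\theta_s}_r(\widetilde f^{\zeta^u}))\psi_s\le0$ for all $p,r$ with $\widetilde f^{\zeta^u}_p>0$, $\widetilde f^{\zeta^u}_r=0$. (This set does not depend on which posterior-WE are observed.)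 $\Phi$ is called $q$-identifying if $\mathcal{Q}_\Phi=\{q\}$. *)

theory Defs
  imports Complex_Main
begin

definition od_paths :: "('v \<times> 'v) set \<Rightarrow> 'v \<Rightarrow> 'v \<Rightarrow> 'v list set" where
  "od_paths E vo vd = {vs. vs \<noteq> [] \<and> hd vs = vo \<and> last vs = vd \<and> distinct vs \<and>
      (\<forall>i. i + 1 < length vs \<longrightarrow> (vs ! i, vs ! (i + 1)) \<in> E)}"

definition path_edges :: "'v list \<Rightarrow> ('v \<times> 'v) set" where
  "path_edges vs = set (zip vs (tl vs))"

definition simplex :: "nat \<Rightarrow> (nat \<Rightarrow> real) set" where
  "simplex m = {x. (\<forall>s. m \<le> s \<longrightarrow> x s = 0) \<and> (\<forall>s<m. 0 \<le> x s) \<and> (\<Sum>s<m. x s) = 1}"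

definition feasible_flow :: "'p set \<Rightarrow> ('p \<Rightarrow> real) \<Rightarrow> bool" where
  "feasible_flow P f \<longleftrightarrow> (\<forall>p. p \<notin> P \<longrightarrow> f p = 0) \<and> (\<forall>p\<in>P. 0 \<le> f p) \<and> sum f P = 1"

definition edge_flow :: "'v list set \<Rightarrow> ('v list \<Rightarrow> real) \<Rightarrow> ('v \<times> 'v) \<Rightarrow> real" where
  "edge_flow P f e = (\<Sum>p\<in>P. if e \<in> path_edges p then f p else 0)"

definition path_cost :: "(nat \<Rightarrow> ('v \<times> 'v) \<Rightarrow> real \<Rightarrow> real) \<Rightarrow> nat \<Rightarrow> 'v list set
    \<Rightarrow> ('v list \<Rightarrow> real) \<Rightarrow> 'v list \<Rightarrow> real" where
  "path_cost C s P f p = (\<Sum>e\<in>path_edges p. C s e (edge_flow P f e))"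

definition exp_cost :: "nat \<Rightarrow> (nat \<Rightarrow> ('v \<times> 'v) \<Rightarrow> real \<Rightarrow> real) \<Rightarrow> (nat \<Rightarrow> real)
    \<Rightarrow> 'v list set \<Rightarrow> ('v list \<Rightarrow> real) \<Rightarrow> 'v list \<Rightarrow> real" where
  "exp_cost m C \<phi> P f p = (\<Sum>s<m. \<phi> s * path_cost C s P f p)"

definition WE :: "nat \<Rightarrow> (nat \<Rightarrow> ('v \<times> 'v) \<Rightarrow> real \<Rightarrow> real) \<Rightarrow> (nat \<Rightarrow> real)
    \<Rightarrow> 'v list set \<Rightarrow> ('v list \<Rightarrow> real) set" where
  "WE m C \<phi> P = {f. feasible_flow P f \<and>
     (\<forall>p\<in>P. 0 < f p \<longrightarrow> (\<forall>r\<in>P. exp_cost m C \<phi> P f p \<le> exp_cost m C \<phi> P f r))}"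

definition point_mass :: "nat \<Rightarrow> nat \<Rightarrow> real" where
  "point_mass s = (\<lambda>t. if t = s then 1 else 0)"

(* column-stochastic z x m matrix Phi u s = probability of signal u in state s *)
definition signalling_scheme :: "nat \<Rightarrow> nat \<Rightarrow> (nat \<Rightarrow> nat \<Rightarrow> real) \<Rightarrow> bool" where
  "signalling_scheme m z \<Phi> \<longleftrightarrow> (\<forall>u<z. \<forall>s<m. 0 \<le> \<Phi> u s) \<and> (\<forall>s<m. (\<Sum>u<z. \<Phi> u s) = 1)"

definition sig_prob :: "nat \<Rightarrow> (nat \<Rightarrow> real) \<Rightarrow> (nat \<Rightarrow> nat \<Rightarrow> real) \<Rightarrow> nat \<Rightarrow> real" where
  "sig_prob m q \<Phi> u = (\<Sum>l<m. \<Phi> u l * q l)"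

definition posterior :: "nat \<Rightarrow> (nat \<Rightarrow> real) \<Rightarrow> (nat \<Rightarrow> nat \<Rightarrow> real) \<Rightarrow> nat \<Rightarrow> nat \<Rightarrow> real" where
  "posterior m q \<Phi> u = (\<lambda>s. if s < m then \<Phi> u s * q s / sig_prob m q \<Phi> u else 0)"

(* Q_Phi, given the observed flows ft u under each signal u *)
definition Q_set :: "nat \<Rightarrow> nat \<Rightarrow> (nat \<Rightarrow> ('v \<times> 'v) \<Rightarrow> real \<Rightarrow> real) \<Rightarrow> 'v list set
    \<Rightarrow> (nat \<Rightarrow> real) \<Rightarrow> (nat \<Rightarrow> nat \<Rightarrow> real) \<Rightarrow> (nat \<Rightarrow> 'v list \<Rightarrow> real) \<Rightarrow> (nat \<Rightarrow> real) set" where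
  "Q_set m z C P q \<Phi> ft = {\<psi> \<in> simplex m. \<forall>u<z. 0 < sig_prob m q \<Phi> u \<longrightarrow>
     (\<forall>p\<in>P. \<forall>r\<in>P. 0 < ft u p \<longrightarrow>
        (0 < ft u r \<longrightarrow>
           (\<Sum>s<m. \<Phi> u s * (path_cost C s P (ft u) p - path_cost C s P (ft u) r) * \<psi> s) = 0) \<and>
        (ft u r = 0 \<longrightarrow>
           (\<Sum>s<m. \<Phi> u s * (path_cost C s P (ft u) p - path_cost C s P (ft u) r) * \<psi> s) \<le> 0))}"

(* q-identifying: Q_Phi = {q} for the observed posterior equilibria
   (any admissible choice of observed flows) *)
definition q_identifying :: "nat \<Rightarrow> nat \<Rightarrow> (nat \<Rightarrow> ('v \<times> 'v) \<Rightarrow> real \<Rightarrow> real) \<Rightarrow> 'v list set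
    \<Rightarrow> (nat \<Rightarrow> real) \<Rightarrow> (nat \<Rightarrow> nat \<Rightarrow> real) \<Rightarrow> bool" where
  "q_identifying m z C P q \<Phi> \<longleftrightarrow>
     (\<forall>ft. (\<forall>u<z. 0 < sig_prob m q \<Phi> u \<longrightarrow> ft u \<in> WE m C (posterior m q \<Phi> u) P)
        \<longrightarrow> Q_set m z C P q \<Phi> ft = {q})"

end

theory Submission
  imports Defs "HOL-Analysis.Elementary_Topology"
begin

(* Let W^a and W^b be the equilibrium sets of two states with W^a \<noteq> W^b. Some mixing weight
   w \<in> (0,1) is separating: in every equilibrium for the cost (1 - w) C^a + w C^b two used paths
   have different C^a-costs. Otherwise every weight admits an equilibrium whose used paths all
   have equal C^a- and C^b-costs; by strict monotonicity such equilibria have unique edge flows,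
   so the weights fall into finitely many pairwise disjoint closed sets, and connectedness of
   [0,1] yields one flow that is an equilibrium for both states, which forces W^a = W^b.
   A signal inducing the posterior (1 - w, w) on {a, b} then makes the equality constraint on
   those two paths a nontrivial linear equation in (\<psi>_a, \<psi>_b) solved by the prior, hence
   \<psi>_a / q_a = \<psi>_b / q_b for every \<psi> \<in> Q_\<Phi>. Pairing every state s \<ge> 1 with state 0 or 1
   so that the two equilibrium sets differ, the ratios \<psi>_s / q_s are all equal, so \<psi> = q. *)

section \<open>Edge flows and monotone costs\<close>

definition edges_of :: "'v list set \<Rightarrow> ('v \<times> 'v) set" where
  "edges_of P = \<Union>(path_edges ` P)"

definition strictly_increasing_costs ::
    "(nat \<Rightarrow> ('v \<times> 'v) \<Rightarrow> real \<Rightarrow> real) \<Rightarrow> 'v list set \<Rightarrow> nat \<Rightarrow> bool" where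
  "strictly_increasing_costs C P s \<longleftrightarrow> (\<forall>e\<in>edges_of P. strict_mono_on {0..} (C s e))"

lemma finite_path_edges [simp]: "finite (path_edges p)"
  by (simp add: path_edges_def)

lemma finite_edges_of: "finite P \<Longrightarrow> finite (edges_of P)"
  by (simp add: edges_of_def)

lemma sum_path_cost_mult_eq_sum_edges:
  assumes "finite P"
  shows "(\<Sum>p\<in>P. path_cost C s P f p * g p) =
         (\<Sum>e\<in>edges_of P. C s e (edge_flow P f e) * edge_flow P g e)"
proof -
  let ?c = "\<lambda>e. C s e (edge_flow P f e)"
  have "(\<Sum>p\<in>P. path_cost C s P f p * g p) =
        (\<Sum>p\<in>P. \<Sum>e\<in>edges_of P. if e \<in> path_edges p then ?c e * g p else 0)"
  proof (rule sum.cong[OF refl])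
    fix p assume "p \<in> P"
    then have "path_edges p = edges_of P \<inter> path_edges p" by (auto simp: edges_of_def)
    then show "path_cost C s P f p * g p = (\<Sum>e\<in>edges_of P. if e \<in> path_edges p then ?c e * g p else 0)"
      using sum.inter_restrict[OF finite_edges_of[OF assms], of "\<lambda>e. ?c e * g p" "path_edges p"]
      by (simp add: path_cost_def sum_distrib_right)
  qed
  also have "\<dots> = (\<Sum>e\<in>edges_of P. \<Sum>p\<in>P. if e \<in> path_edges p then ?c e * g p else 0)"
    by (rule sum.swap)
  also have "\<dots> = (\<Sum>e\<in>edges_of P. ?c e * edge_flow P g e)"
    by (auto simp: edge_flow_def sum_distrib_left intro!: sum.cong)
  finally show ?thesis .
qed

lemma edge_flow_diff: "edge_flow P (\<lambda>p. f p - g p) e = edge_flow P f e - edge_flow P g e"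
  unfolding edge_flow_def sum_subtractf[symmetric] by (rule sum.cong) auto

lemma edge_flow_nonneg: "\<forall>p\<in>P. 0 \<le> f p \<Longrightarrow> 0 \<le> edge_flow P f e"
  by (auto simp: edge_flow_def intro!: sum_nonneg)

lemma path_cost_eq_if_edge_flows_eq:
  assumes "\<forall>e\<in>edges_of P. edge_flow P f e = edge_flow P g e" "p \<in> P"
  shows "path_cost C s P f p = path_cost C s P g p"
  unfolding path_cost_def using assms by (auto simp: edges_of_def intro!: sum.cong)

lemma sum_path_cost_mult_swap_if_edge_flows_eq:
  assumes "finite P" "\<forall>e\<in>edges_of P. edge_flow P f e = edge_flow P g e"
  shows "(\<Sum>p\<in>P. path_cost C s P f p * g p) = (\<Sum>p\<in>P. path_cost C s P f p * f p)"
  unfolding sum_path_cost_mult_eq_sum_edges[OF assms(1)] using assms(2) by (auto intro!: sum.cong)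

lemma strict_mono_on_diff_mult_pos:
  fixes h :: "real \<Rightarrow> real"
  assumes "strict_mono_on {0..} h" "0 \<le> x" "0 \<le> y" "x \<noteq> y"
  shows "0 < (h x - h y) * (x - y)"
proof (cases "x < y")
  case True
  then have "h x < h y" using assms by (auto intro: strict_mono_onD)
  with True show ?thesis by (simp add: mult_neg_neg)
next
  case False
  then have "y < x" using assms(4) by simp
  moreover from this have "h y < h x" using assms by (auto intro: strict_mono_onD)
  ultimately show ?thesis by simp
qed

lemma strict_mono_on_diff_mult_nonneg:
  fixes h :: "real \<Rightarrow> real"
  assumes "strict_mono_on {0..} h" "0 \<le> x" "0 \<le> y"
  shows "0 \<le> (h x - h y) * (x - y)"
  using strict_mono_on_diff_mult_pos[OF assms] by (cases "x = y") (auto intro: less_imp_le)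

definition flow_gap :: "'p set \<Rightarrow> (('p \<Rightarrow> real) \<Rightarrow> 'p \<Rightarrow> real) \<Rightarrow> ('p \<Rightarrow> real) \<Rightarrow> ('p \<Rightarrow> real) \<Rightarrow> real"
  where "flow_gap P K f g = (\<Sum>p\<in>P. (K f p - K g p) * (f p - g p))"

lemma flow_gap_expand:
  "flow_gap P K f g = ((\<Sum>p\<in>P. K f p * f p) - (\<Sum>p\<in>P. K f p * g p))
                    + ((\<Sum>p\<in>P. K g p * g p) - (\<Sum>p\<in>P. K g p * f p))"
  unfolding flow_gap_def sum_subtractf[symmetric] sum.distrib[symmetric]
  by (rule sum.cong) (simp_all add: algebra_simps)

lemma flow_gap_path_cost_eq_sum_edges:
  assumes "finite P"
  shows "flow_gap P (path_cost C s P) f g =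
    (\<Sum>e\<in>edges_of P. (C s e (edge_flow P f e) - C s e (edge_flow P g e)) * (edge_flow P f e - edge_flow P g e))"
proof -
  have "flow_gap P (path_cost C s P) f g =
      (\<Sum>p\<in>P. path_cost C s P f p * (f p - g p)) - (\<Sum>p\<in>P. path_cost C s P g p * (f p - g p))"
    by (simp add: flow_gap_def left_diff_distrib sum_subtractf)
  also have "\<dots> = (\<Sum>e\<in>edges_of P. C s e (edge_flow P f e) * (edge_flow P f e - edge_flow P g e))
      - (\<Sum>e\<in>edges_of P. C s e (edge_flow P g e) * (edge_flow P f e - edge_flow P g e))"
    by (simp add: sum_path_cost_mult_eq_sum_edges[OF assms] edge_flow_diff)
  also have "\<dots> = (\<Sum>e\<in>edges_of P. (C s e (edge_flow P f e) - C s e (edge_flow P g e)) *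
      (edge_flow P f e - edge_flow P g e))"
    by (simp add: left_diff_distrib sum_subtractf)
  finally show ?thesis .
qed

lemma flow_gap_path_cost_nonneg:
  assumes "finite P" "strictly_increasing_costs C P s" "\<forall>p\<in>P. 0 \<le> f p" "\<forall>p\<in>P. 0 \<le> g p"
  shows "0 \<le> flow_gap P (path_cost C s P) f g"
  unfolding flow_gap_path_cost_eq_sum_edges[OF assms(1)] using assms(2-4)
  by (auto intro!: sum_nonneg strict_mono_on_diff_mult_nonneg edge_flow_nonneg
      simp: strictly_increasing_costs_def)

lemma edge_flows_eq_if_flow_gap_nonpos:
  assumes "finite P" "strictly_increasing_costs C P s" "\<forall>p\<in>P. 0 \<le> f p" "\<forall>p\<in>P. 0 \<le> g p"
    and "flow_gap P (path_cost C s P) f g \<le> 0"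
  shows "\<forall>e\<in>edges_of P. edge_flow P f e = edge_flow P g e"
proof (rule ccontr)
  assume "\<not> ?thesis"
  then obtain e0 where e0: "e0 \<in> edges_of P" "edge_flow P f e0 \<noteq> edge_flow P g e0" by auto
  let ?F = "\<lambda>e. (C s e (edge_flow P f e) - C s e (edge_flow P g e)) * (edge_flow P f e - edge_flow P g e)"
  have "\<forall>e\<in>edges_of P. 0 \<le> ?F e"
    using assms(2-4) by (auto intro!: strict_mono_on_diff_mult_nonneg edge_flow_nonneg
        simp: strictly_increasing_costs_def)
  then have "?F e0 \<le> sum ?F (edges_of P)"
    using e0(1) finite_edges_of[OF assms(1)] by (intro member_le_sum) auto
  moreover have "0 < ?F e0"
    using assms(2-4) e0 by (auto intro!: strict_mono_on_diff_mult_pos edge_flow_nonneg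
        simp: strictly_increasing_costs_def)
  ultimately show False using assms(5) flow_gap_path_cost_eq_sum_edges[OF assms(1)] by simp
qed

section \<open>Wardrop equilibria for an abstract path cost\<close>

definition wardrop :: "'p set \<Rightarrow> (('p \<Rightarrow> real) \<Rightarrow> 'p \<Rightarrow> real) \<Rightarrow> ('p \<Rightarrow> real) \<Rightarrow> bool" where
  "wardrop P K f \<longleftrightarrow> feasible_flow P f \<and> (\<forall>p\<in>P. 0 < f p \<longrightarrow> (\<forall>r\<in>P. K f p \<le> K f r))"

lemma WE_eq_wardrop: "WE m C \<phi> P = {f. wardrop P (exp_cost m C \<phi> P) f}"
  by (simp add: WE_def wardrop_def)

lemma feasible_flow_has_used_path:
  assumes "feasible_flow P f" "finite P"
  obtains p where "p \<in> P" "0 < f p"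
proof -
  have "sum f P \<noteq> 0" using assms(1) by (simp add: feasible_flow_def)
  then obtain p where "p \<in> P" "f p \<noteq> 0" by (meson sum.neutral)
  with assms(1) that show thesis by (force simp: feasible_flow_def)
qed

lemma sum_mult_flow_eq_const:
  assumes "feasible_flow P g" "\<forall>p\<in>P. 0 < g p \<longrightarrow> X p = c"
  shows "(\<Sum>p\<in>P. X p * g p) = c"
proof -
  have "(\<Sum>p\<in>P. X p * g p) = (\<Sum>p\<in>P. c * g p)"
    using assms by (intro sum.cong) (auto simp: feasible_flow_def order_le_less)
  also have "\<dots> = c" using assms(1) by (simp add: feasible_flow_def sum_distrib_left[symmetric])
  finally show ?thesis .
qed

lemma sum_mult_flow_ge:
  assumes "feasible_flow P g" "\<forall>p\<in>P. c \<le> X p"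
  shows "c \<le> (\<Sum>p\<in>P. X p * g p)"
proof -
  have "c = (\<Sum>p\<in>P. c * g p)" using assms(1) by (simp add: feasible_flow_def sum_distrib_left[symmetric])
  also have "\<dots> \<le> (\<Sum>p\<in>P. X p * g p)"
    using assms by (auto intro!: sum_mono mult_right_mono simp: feasible_flow_def)
  finally show ?thesis .
qed

lemma used_paths_attain_min:
  assumes "finite P" "feasible_flow P g" "\<forall>p\<in>P. c \<le> X p" "(\<Sum>p\<in>P. X p * g p) \<le> c"
    and "p \<in> P" "0 < g p"
  shows "X p = c"
proof -
  have nonneg: "\<forall>r\<in>P. 0 \<le> (X r - c) * g r" using assms(2,3) by (simp add: feasible_flow_def)
  have "(\<Sum>r\<in>P. (X r - c) * g r) = (\<Sum>r\<in>P. X r * g r) - c * sum g P"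
    by (simp add: left_diff_distrib sum_subtractf sum_distrib_left)
  then have "(\<Sum>r\<in>P. (X r - c) * g r) \<le> 0" using assms(2,4) by (simp add: feasible_flow_def)
  moreover have "0 \<le> (\<Sum>r\<in>P. (X r - c) * g r)" using nonneg by (simp add: sum_nonneg)
  ultimately have "(\<Sum>r\<in>P. (X r - c) * g r) = 0" by simp
  then have "\<forall>r\<in>P. (X r - c) * g r = 0"
    using sum_nonneg_eq_0_iff[OF assms(1), of "\<lambda>r. (X r - c) * g r"] nonneg by simp
  then have "(X p - c) * g p = 0" using assms(5) by blast
  then show ?thesis using assms(6) by simp
qed

lemma wardrop_cost_on_support:
  assumes "wardrop P K f" "p \<in> P" "0 < f p" "r \<in> P" "0 < f r"
  shows "K f p = K f r"
  using assms unfolding wardrop_def by (meson order_antisym)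

lemma wardrop_variational_ineq:
  assumes "finite P" "wardrop P K f" "feasible_flow P g"
  shows "(\<Sum>p\<in>P. K f p * f p) \<le> (\<Sum>p\<in>P. K f p * g p)"
proof -
  have feas: "feasible_flow P f" using assms(2) by (simp add: wardrop_def)
  obtain p0 where p0: "p0 \<in> P" "0 < f p0" using feasible_flow_has_used_path[OF feas assms(1)] .
  have "(\<Sum>p\<in>P. K f p * f p) = K f p0"
    using wardrop_cost_on_support[OF assms(2) _ _ p0] by (intro sum_mult_flow_eq_const[OF feas]) blast
  also have "\<dots> \<le> (\<Sum>p\<in>P. K f p * g p)"
    using assms(2,3) p0 by (intro sum_mult_flow_ge) (auto simp: wardrop_def)
  finally show ?thesis .
qed

lemma wardrop_flow_gap_nonpos:
  assumes "finite P" "wardrop P K f" "wardrop P K g"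
  shows "flow_gap P K f g \<le> 0"
  using wardrop_variational_ineq[OF assms(1,2), of g] wardrop_variational_ineq[OF assms(1,3), of f] assms(2,3)
  by (simp add: flow_gap_expand wardrop_def)

section \<open>Mixtures of two states\<close>

definition mixed_cost :: "(nat \<Rightarrow> ('v \<times> 'v) \<Rightarrow> real \<Rightarrow> real) \<Rightarrow> 'v list set \<Rightarrow> nat \<Rightarrow> nat \<Rightarrow> real
    \<Rightarrow> ('v list \<Rightarrow> real) \<Rightarrow> 'v list \<Rightarrow> real" where
  "mixed_cost C P a b w f p = (1 - w) * path_cost C a P f p + w * path_cost C b P f p"

lemma mixed_cost_0 [simp]: "mixed_cost C P a b 0 = path_cost C a P"
  by (simp add: mixed_cost_def fun_eq_iff)

lemma mixed_cost_1 [simp]: "mixed_cost C P a b 1 = path_cost C b P"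
  by (simp add: mixed_cost_def fun_eq_iff)

lemma flow_gap_mixed_cost:
  "flow_gap P (mixed_cost C P a b w) f g =
     (1 - w) * flow_gap P (path_cost C a P) f g + w * flow_gap P (path_cost C b P) f g"
  unfolding flow_gap_def mixed_cost_def sum_distrib_left sum.distrib[symmetric]
  by (rule sum.cong) (simp_all add: algebra_simps)

lemma mixed_wardrop_edge_flows_unique:
  assumes "finite P" "strictly_increasing_costs C P a" "strictly_increasing_costs C P b"
    "0 \<le> w" "w \<le> 1" "wardrop P (mixed_cost C P a b w) f" "wardrop P (mixed_cost C P a b w) g"
  shows "\<forall>e\<in>edges_of P. edge_flow P f e = edge_flow P g e"
proof -
  have nonneg: "\<forall>p\<in>P. 0 \<le> f p" "\<forall>p\<in>P. 0 \<le> g p"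
    using assms(6,7) by (auto simp: wardrop_def feasible_flow_def)
  have gap_a: "0 \<le> flow_gap P (path_cost C a P) f g" and gap_b: "0 \<le> flow_gap P (path_cost C b P) f g"
    using flow_gap_path_cost_nonneg assms(1-3) nonneg by blast+
  have mixed: "(1 - w) * flow_gap P (path_cost C a P) f g + w * flow_gap P (path_cost C b P) f g \<le> 0"
    using wardrop_flow_gap_nonpos[OF assms(1,6,7)] by (simp add: flow_gap_mixed_cost)
  show ?thesis
  proof (cases "w < 1")
    case True
    have "0 \<le> w * flow_gap P (path_cost C b P) f g" using assms(4) gap_b by simp
    then have "(1 - w) * flow_gap P (path_cost C a P) f g \<le> 0" using mixed by linarith
    then have "flow_gap P (path_cost C a P) f g \<le> 0" using True by (simp add: mult_le_0_iff)
    then show ?thesis using edge_flows_eq_if_flow_gap_nonpos assms(1,2) nonneg by blast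
  next
    case False
    then have "flow_gap P (path_cost C b P) f g \<le> 0" using mixed assms(5) by simp
    then show ?thesis using edge_flows_eq_if_flow_gap_nonpos assms(1,3) nonneg by blast
  qed
qed

(* A flow that is an equilibrium for both states shares its edge flows with every equilibrium
   of the first state, and these edge flows determine all path costs. *)
lemma wardrop_path_cost_transfer:
  assumes "finite P" "strictly_increasing_costs C P a" "strictly_increasing_costs C P b"
    "wardrop P (path_cost C a P) f" "wardrop P (path_cost C b P) f" "wardrop P (path_cost C a P) g"
  shows "wardrop P (path_cost C b P) g"
proof -
  have flows: "\<forall>e\<in>edges_of P. edge_flow P f e = edge_flow P g e"
    using mixed_wardrop_edge_flows_unique[OF assms(1-3), of 0 f g] assms(4,6) by simp
  have feas: "feasible_flow P f" "feasible_flow P g" using assms(4,6) by (auto simp: wardrop_def)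
  obtain p0 where p0: "p0 \<in> P" "0 < f p0" using feasible_flow_has_used_path[OF feas(1) assms(1)] .
  let ?c = "path_cost C b P f p0"
  have min: "\<forall>r\<in>P. ?c \<le> path_cost C b P f r" using assms(5) p0 by (auto simp: wardrop_def)
  have "(\<Sum>p\<in>P. path_cost C b P f p * g p) = (\<Sum>p\<in>P. path_cost C b P f p * f p)"
    by (rule sum_path_cost_mult_swap_if_edge_flows_eq[OF assms(1) flows])
  also have "\<dots> = ?c"
    using wardrop_cost_on_support[OF assms(5) _ _ p0] by (intro sum_mult_flow_eq_const[OF feas(1)]) blast
  finally have total: "(\<Sum>p\<in>P. path_cost C b P f p * g p) = ?c" .
  have used: "path_cost C b P f p = ?c" if "p \<in> P" "0 < g p" for p
    by (rule used_paths_attain_min[OF assms(1) feas(2) min _ that]) (simp add: total)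
  have "path_cost C b P g p = path_cost C b P f p" if "p \<in> P" for p
    using path_cost_eq_if_edge_flows_eq[OF flows that] by simp
  then show ?thesis using feas(2) used min by (auto simp: wardrop_def)
qed

lemma wardrop_sets_eq_if_common_equilibrium:
  assumes "finite P" "strictly_increasing_costs C P a" "strictly_increasing_costs C P b"
    "wardrop P (path_cost C a P) f" "wardrop P (path_cost C b P) f"
  shows "{g. wardrop P (path_cost C a P) g} = {g. wardrop P (path_cost C b P) g}"
  using wardrop_path_cost_transfer[OF assms] wardrop_path_cost_transfer[OF assms(1,3,2,5,4)] by auto

section \<open>Equilibria with constant costs on their support\<close>

definition equal_costs_on_support ::
    "(nat \<Rightarrow> ('v \<times> 'v) \<Rightarrow> real \<Rightarrow> real) \<Rightarrow> 'v list set \<Rightarrow> nat \<Rightarrow> ('v list \<Rightarrow> real) \<Rightarrow> bool" where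
  "equal_costs_on_support C P s f \<longleftrightarrow>
     (\<forall>p\<in>P. \<forall>r\<in>P. 0 < f p \<longrightarrow> 0 < f r \<longrightarrow> path_cost C s P f p = path_cost C s P f r)"

definition constant_cost_flows ::
    "(nat \<Rightarrow> ('v \<times> 'v) \<Rightarrow> real \<Rightarrow> real) \<Rightarrow> 'v list set \<Rightarrow> nat \<Rightarrow> nat \<Rightarrow> ('v list \<Rightarrow> real) set" where
  "constant_cost_flows C P a b =
     {f. feasible_flow P f \<and> equal_costs_on_support C P a f \<and> equal_costs_on_support C P b f}"

definition wardrop_weights ::
    "(nat \<Rightarrow> ('v \<times> 'v) \<Rightarrow> real \<Rightarrow> real) \<Rightarrow> 'v list set \<Rightarrow> nat \<Rightarrow> nat \<Rightarrow> ('v list \<Rightarrow> real) \<Rightarrow> real set" where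
  "wardrop_weights C P a b f = {w \<in> {0..1}. wardrop P (mixed_cost C P a b w) f}"

lemma equal_costs_on_supportD:
  assumes "equal_costs_on_support C P s f" "p \<in> P" "r \<in> P" "0 < f p" "0 < f r"
  shows "path_cost C s P f p = path_cost C s P f r"
  using assms unfolding equal_costs_on_support_def by blast

lemma equal_costs_on_support_mixed:
  assumes "wardrop P (mixed_cost C P a b w) f" "0 < w" "equal_costs_on_support C P a f"
  shows "equal_costs_on_support C P b f"
  unfolding equal_costs_on_support_def
proof (intro ballI impI)
  fix p r assume pr: "p \<in> P" "r \<in> P" "0 < f p" "0 < f r"
  have "mixed_cost C P a b w f p = mixed_cost C P a b w f r"
    by (rule wardrop_cost_on_support[OF assms(1) pr(1,3,2,4)])
  moreover have "path_cost C a P f p = path_cost C a P f r"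
    by (rule equal_costs_on_supportD[OF assms(3) pr])
  ultimately have "w * path_cost C b P f p = w * path_cost C b P f r"
    by (simp add: mixed_cost_def)
  then show "path_cost C b P f p = path_cost C b P f r" using assms(2) by simp
qed

lemma edge_flows_eq_if_same_support:
  assumes "finite P" "strictly_increasing_costs C P s" "feasible_flow P f" "feasible_flow P g"
    "{p\<in>P. 0 < f p} = {p\<in>P. 0 < g p}"
    "equal_costs_on_support C P s f" "equal_costs_on_support C P s g"
  shows "\<forall>e\<in>edges_of P. edge_flow P f e = edge_flow P g e"
proof -
  obtain p0 where p0: "p0 \<in> P" "0 < f p0" using feasible_flow_has_used_path[OF assms(3,1)] .
  have p0g: "0 < g p0" using assms(5) p0 by blast
  have support: "0 < f p \<longleftrightarrow> 0 < g p" if "p \<in> P" for p using assms(5) that by blast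
  have cf: "\<forall>p\<in>P. 0 < h p \<longrightarrow> path_cost C s P f p = path_cost C s P f p0" if "h \<in> {f, g}" for h
    using that support equal_costs_on_supportD[OF assms(6) _ p0(1) _ p0(2)] by blast
  have cg: "\<forall>p\<in>P. 0 < h p \<longrightarrow> path_cost C s P g p = path_cost C s P g p0" if "h \<in> {f, g}" for h
    using that support equal_costs_on_supportD[OF assms(7) _ p0(1) _ p0g] by blast
  have "flow_gap P (path_cost C s P) f g = 0"
    unfolding flow_gap_expand
    using sum_mult_flow_eq_const[OF assms(3) cf] sum_mult_flow_eq_const[OF assms(4) cf]
      sum_mult_flow_eq_const[OF assms(3) cg] sum_mult_flow_eq_const[OF assms(4) cg] by simp
  moreover have "\<forall>p\<in>P. 0 \<le> f p" "\<forall>p\<in>P. 0 \<le> g p"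
    using assms(3,4) by (simp_all add: feasible_flow_def)
  ultimately show ?thesis using edge_flows_eq_if_flow_gap_nonpos[OF assms(1,2)] by simp
qed

lemma support_cost_eq_if_edge_flows_eq:
  assumes "finite P" "feasible_flow P f" "feasible_flow P g"
    "equal_costs_on_support C P s f" "equal_costs_on_support C P s g"
    "\<forall>e\<in>edges_of P. edge_flow P f e = edge_flow P g e"
    "p \<in> P" "0 < f p" "r \<in> P" "0 < g r"
  shows "path_cost C s P f p = path_cost C s P g r"
proof -
  have "path_cost C s P g r = (\<Sum>p\<in>P. path_cost C s P g p * g p)"
    using equal_costs_on_supportD[OF assms(5) _ assms(9) _ assms(10)]
    by (intro sum_mult_flow_eq_const[OF assms(3), symmetric]) blast
  also have "\<dots> = (\<Sum>p\<in>P. path_cost C s P f p * g p)"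
    using path_cost_eq_if_edge_flows_eq[OF assms(6)] by (intro sum.cong) simp_all
  also have "\<dots> = (\<Sum>p\<in>P. path_cost C s P f p * f p)"
    by (rule sum_path_cost_mult_swap_if_edge_flows_eq[OF assms(1,6)])
  also have "\<dots> = path_cost C s P f p"
    using equal_costs_on_supportD[OF assms(4) _ assms(7) _ assms(8)]
    by (intro sum_mult_flow_eq_const[OF assms(2)]) blast
  finally show ?thesis by simp
qed

lemma wardrop_mixed_iff_min_at_used_path:
  assumes "f \<in> constant_cost_flows C P a b" "p0 \<in> P" "0 < f p0"
  shows "wardrop P (mixed_cost C P a b w) f \<longleftrightarrow>
    (\<forall>r\<in>P. mixed_cost C P a b w f p0 \<le> mixed_cost C P a b w f r)"
proof
  assume "wardrop P (mixed_cost C P a b w) f"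
  then show "\<forall>r\<in>P. mixed_cost C P a b w f p0 \<le> mixed_cost C P a b w f r"
    using assms(2,3) by (simp add: wardrop_def)
next
  assume min: "\<forall>r\<in>P. mixed_cost C P a b w f p0 \<le> mixed_cost C P a b w f r"
  have f: "feasible_flow P f" "equal_costs_on_support C P a f" "equal_costs_on_support C P b f"
    using assms(1) by (simp_all add: constant_cost_flows_def)
  show "wardrop P (mixed_cost C P a b w) f"
    unfolding wardrop_def
  proof (intro conjI f(1) ballI impI)
    fix p r assume p: "p \<in> P" "0 < f p" and r: "r \<in> P"
    have "path_cost C a P f p = path_cost C a P f p0" "path_cost C b P f p = path_cost C b P f p0"
      using equal_costs_on_supportD[OF f(2) p(1) assms(2) p(2) assms(3)]
        equal_costs_on_supportD[OF f(3) p(1) assms(2) p(2) assms(3)] .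
    then have "mixed_cost C P a b w f p = mixed_cost C P a b w f p0" by (simp add: mixed_cost_def)
    then show "mixed_cost C P a b w f p \<le> mixed_cost C P a b w f r" using min r by simp
  qed
qed

lemma wardrop_weights_eq_if_edge_flows_eq:
  assumes "finite P" "f \<in> constant_cost_flows C P a b" "g \<in> constant_cost_flows C P a b"
    "\<forall>e\<in>edges_of P. edge_flow P f e = edge_flow P g e"
  shows "wardrop_weights C P a b f = wardrop_weights C P a b g"
proof -
  have f: "feasible_flow P f" "equal_costs_on_support C P a f" "equal_costs_on_support C P b f"
    using assms(2) by (simp_all add: constant_cost_flows_def)
  have g: "feasible_flow P g" "equal_costs_on_support C P a g" "equal_costs_on_support C P b g"
    using assms(3) by (simp_all add: constant_cost_flows_def)
  obtain p0 where p0: "p0 \<in> P" "0 < f p0" using feasible_flow_has_used_path[OF f(1) assms(1)] .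
  obtain r0 where r0: "r0 \<in> P" "0 < g r0" using feasible_flow_has_used_path[OF g(1) assms(1)] .
  have "path_cost C a P f p0 = path_cost C a P g r0" "path_cost C b P f p0 = path_cost C b P g r0"
    using support_cost_eq_if_edge_flows_eq[OF assms(1) f(1) g(1) f(2) g(2) assms(4) p0 r0]
      support_cost_eq_if_edge_flows_eq[OF assms(1) f(1) g(1) f(3) g(3) assms(4) p0 r0] .
  then have used: "mixed_cost C P a b w f p0 = mixed_cost C P a b w g r0" for w
    by (simp add: mixed_cost_def)
  have all: "mixed_cost C P a b w f r = mixed_cost C P a b w g r" if "r \<in> P" for w r
    using path_cost_eq_if_edge_flows_eq[OF assms(4) that] by (simp add: mixed_cost_def)
  have "wardrop P (mixed_cost C P a b w) f \<longleftrightarrow> wardrop P (mixed_cost C P a b w) g" for w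
    unfolding wardrop_mixed_iff_min_at_used_path[OF assms(2) p0]
      wardrop_mixed_iff_min_at_used_path[OF assms(3) r0]
    by (rule ball_cong[OF refl]) (simp add: used all)
  then show ?thesis by (simp add: wardrop_weights_def)
qed

lemma closed_wardrop_weights: "closed (wardrop_weights C P a b f)"
proof (cases "feasible_flow P f")
  case False
  then show ?thesis by (simp add: wardrop_weights_def wardrop_def)
next
  case True
  then have "wardrop_weights C P a b f =
      {0..1} \<inter> (\<Inter>p\<in>{p\<in>P. 0 < f p}. \<Inter>r\<in>P. {w. mixed_cost C P a b w f p \<le> mixed_cost C P a b w f r})"
    by (auto simp: wardrop_weights_def wardrop_def)
  moreover have "closed {w::real. mixed_cost C P a b w f p \<le> mixed_cost C P a b w f r}" for p r
    unfolding mixed_cost_def by (intro closed_Collect_le continuous_intros)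
  ultimately show ?thesis by (auto intro!: closed_Int closed_INT)
qed

(* Constant-cost flows with the same support have the same edge flows, hence the same weight set. *)
lemma finite_wardrop_weights_family:
  assumes "finite P" "strictly_increasing_costs C P a"
  shows "finite (wardrop_weights C P a b ` constant_cost_flows C P a b)"
proof -
  let ?G = "constant_cost_flows C P a b"
  define rep where "rep U = (SOME f. f \<in> ?G \<and> {p\<in>P. 0 < f p} = U)" for U
  have "wardrop_weights C P a b ` ?G \<subseteq> (\<lambda>U. wardrop_weights C P a b (rep U)) ` Pow P"
  proof
    fix X assume "X \<in> wardrop_weights C P a b ` ?G"
    then obtain f where f: "f \<in> ?G" "X = wardrop_weights C P a b f" by blast
    let ?U = "{p\<in>P. 0 < f p}"
    have rep: "rep ?U \<in> ?G" "{p\<in>P. 0 < rep ?U p} = ?U"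
      unfolding rep_def using someI_ex[of "\<lambda>g. g \<in> ?G \<and> {p\<in>P. 0 < g p} = ?U"] f(1) by blast+
    have "\<forall>e\<in>edges_of P. edge_flow P (rep ?U) e = edge_flow P f e"
      using edge_flows_eq_if_same_support[OF assms, of "rep ?U" f] rep f(1)
      by (simp add: constant_cost_flows_def)
    then have "wardrop_weights C P a b (rep ?U) = X"
      using wardrop_weights_eq_if_edge_flows_eq[OF assms(1) rep(1) f(1)] f(2) by simp
    then show "X \<in> (\<lambda>U. wardrop_weights C P a b (rep U)) ` Pow P" by blast
  qed
  then show ?thesis using assms(1) by (meson finite_Pow_iff finite_imageI finite_subset)
qed

lemma disjoint_wardrop_weights_family:
  assumes "finite P" "strictly_increasing_costs C P a" "strictly_increasing_costs C P b"
  shows "pairwise disjnt (wardrop_weights C P a b ` constant_cost_flows C P a b)"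
proof (rule pairwise_imageI)
  fix f g assume fg: "f \<in> constant_cost_flows C P a b" "g \<in> constant_cost_flows C P a b"
    and ne: "wardrop_weights C P a b f \<noteq> wardrop_weights C P a b g"
  show "disjnt (wardrop_weights C P a b f) (wardrop_weights C P a b g)"
    unfolding disjnt_def
  proof (rule equals0I)
    fix w assume "w \<in> wardrop_weights C P a b f \<inter> wardrop_weights C P a b g"
    then have "\<forall>e\<in>edges_of P. edge_flow P f e = edge_flow P g e"
      by (intro mixed_wardrop_edge_flows_unique[OF assms]) (auto simp: wardrop_weights_def)
    then show False using wardrop_weights_eq_if_edge_flows_eq[OF assms(1) fg] ne by simp
  qed
qed

lemma connected_subset_of_disjoint_closed_cover:
  assumes "connected S" "finite \<F>" "\<And>X. X \<in> \<F> \<Longrightarrow> closed X" "pairwise disjnt \<F>"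
    "S \<subseteq> \<Union>\<F>" "X \<in> \<F>" "x \<in> S" "x \<in> X"
  shows "S \<subseteq> X"
proof -
  define R where "R = \<Union>(\<F> - {X})"
  have "closed R" unfolding R_def using assms(2,3) by (intro closed_Union) auto
  moreover have "X \<inter> R \<inter> S = {}"
    using assms(4,6) unfolding R_def by (auto simp: pairwise_def disjnt_def)
  moreover have cover: "S \<subseteq> X \<union> R" using assms(5) unfolding R_def by blast
  ultimately have "X \<inter> S = {} \<or> R \<inter> S = {}"
    using connected_closedD[OF assms(1)] assms(3)[OF assms(6)] by blast
  then show ?thesis using cover assms(7,8) by blast
qed

definition separating_weight ::
    "(nat \<Rightarrow> ('v \<times> 'v) \<Rightarrow> real \<Rightarrow> real) \<Rightarrow> 'v list set \<Rightarrow> nat \<Rightarrow> nat \<Rightarrow> real \<Rightarrow> bool" where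
  "separating_weight C P a b w \<longleftrightarrow> 0 < w \<and> w < 1 \<and>
     (\<forall>f. wardrop P (mixed_cost C P a b w) f \<longrightarrow> \<not> equal_costs_on_support C P a f)"

lemma separating_weight_exists:
  assumes "finite P" "strictly_increasing_costs C P a" "strictly_increasing_costs C P b"
    and "{f. wardrop P (path_cost C a P) f} \<noteq> {f. wardrop P (path_cost C b P) f}"
  shows "\<exists>w. separating_weight C P a b w"
proof (rule ccontr)
  assume no_separating: "\<nexists>w. separating_weight C P a b w"
  have cover: "{0<..<1} \<subseteq> \<Union>(wardrop_weights C P a b ` constant_cost_flows C P a b)"
  proof
    fix w :: real assume w: "w \<in> {0<..<1}"
    with no_separating obtain f
      where f: "wardrop P (mixed_cost C P a b w) f" "equal_costs_on_support C P a f"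
      by (auto simp: separating_weight_def)
    then have "f \<in> constant_cost_flows C P a b"
      using equal_costs_on_support_mixed[OF f(1) _ f(2)] w
      by (auto simp: constant_cost_flows_def wardrop_def)
    moreover have "w \<in> wardrop_weights C P a b f" using f(1) w by (simp add: wardrop_weights_def)
    ultimately show "w \<in> \<Union>(wardrop_weights C P a b ` constant_cost_flows C P a b)" by blast
  qed
  moreover have half: "1/2 \<in> {0<..<(1::real)}" by simp
  ultimately obtain f0 where f0: "f0 \<in> constant_cost_flows C P a b" "1/2 \<in> wardrop_weights C P a b f0"
    by blast
  have "{0<..<1} \<subseteq> wardrop_weights C P a b f0"
    by (rule connected_subset_of_disjoint_closed_cover[OF connected_Ioo
          finite_wardrop_weights_family[OF assms(1,2)] _ disjoint_wardrop_weights_family[OF assms(1-3)]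
          cover _ half f0(2)])
      (use f0(1) closed_wardrop_weights in auto)
  then have "closure {0<..<1} \<subseteq> wardrop_weights C P a b f0"
    by (rule closure_minimal[OF _ closed_wardrop_weights])
  then have "{0..1} \<subseteq> wardrop_weights C P a b f0" by simp
  then have "0 \<in> wardrop_weights C P a b f0" "1 \<in> wardrop_weights C P a b f0" by auto
  then have "{f. wardrop P (path_cost C a P) f} = {f. wardrop P (path_cost C b P) f}"
    by (intro wardrop_sets_eq_if_common_equilibrium[OF assms(1-3), of f0])
      (simp_all add: wardrop_weights_def)
  with assms(4) show False ..
qed

section \<open>Signalling schemes built from pairs of states\<close>

lemma sum_lessThan_two_points:
  fixes m :: nat
  assumes "a < m" "b < m" "a \<noteq> b" "\<And>s. s < m \<Longrightarrow> s \<noteq> a \<Longrightarrow> s \<noteq> b \<Longrightarrow> F s = 0"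
  shows "(\<Sum>s<m. F s) = F a + F b"
proof -
  have "(\<Sum>s<m. F s) = (\<Sum>s\<in>{a, b}. F s)"
    using assms by (intro sum.mono_neutral_right) auto
  then show ?thesis using assms(3) by simp
qed

lemma sig_prob_mult_exp_cost_diff:
  assumes "sig_prob m q \<Phi> u \<noteq> 0"
  shows "(\<Sum>s<m. \<Phi> u s * (path_cost C s P f p - path_cost C s P f r) * q s) =
    sig_prob m q \<Phi> u * (exp_cost m C (posterior m q \<Phi> u) P f p - exp_cost m C (posterior m q \<Phi> u) P f r)"
proof -
  have "sig_prob m q \<Phi> u * (exp_cost m C (posterior m q \<Phi> u) P f p - exp_cost m C (posterior m q \<Phi> u) P f r)
      = (\<Sum>s<m. sig_prob m q \<Phi> u * (posterior m q \<Phi> u s * (path_cost C s P f p - path_cost C s P f r)))"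
    by (simp add: exp_cost_def sum_distrib_left sum_subtractf[symmetric] right_diff_distrib)
  also have "\<dots> = (\<Sum>s<m. \<Phi> u s * (path_cost C s P f p - path_cost C s P f r) * q s)"
    using assms by (intro sum.cong) (auto simp: posterior_def)
  finally show ?thesis by simp
qed

lemma prior_in_Q_set:
  assumes "q \<in> simplex m" "\<forall>u<z. 0 < sig_prob m q \<Phi> u \<longrightarrow> ft u \<in> WE m C (posterior m q \<Phi> u) P"
  shows "q \<in> Q_set m z C P q \<Phi> ft"
  unfolding Q_set_def mem_Collect_eq
proof (intro conjI[OF assms(1)] allI impI ballI)
  fix u p r assume u: "u < z" "0 < sig_prob m q \<Phi> u" and pr: "p \<in> P" "r \<in> P" "0 < ft u p"
  let ?e = "exp_cost m C (posterior m q \<Phi> u) P (ft u)"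
  let ?S = "\<Sum>s<m. \<Phi> u s * (path_cost C s P (ft u) p - path_cost C s P (ft u) r) * q s"
  have S: "?S = sig_prob m q \<Phi> u * (?e p - ?e r)"
    using u(2) by (intro sig_prob_mult_exp_cost_diff) simp
  have eqm: "wardrop P (exp_cost m C (posterior m q \<Phi> u) P) (ft u)"
    using assms(2) u by (simp add: WE_eq_wardrop)
  then have le: "?e p \<le> ?e r" using pr by (simp add: wardrop_def)
  show "(0 < ft u r \<longrightarrow> ?S = 0) \<and> (ft u r = 0 \<longrightarrow> ?S \<le> 0)"
  proof (intro conjI impI)
    assume "0 < ft u r"
    then have "?e p = ?e r" by (rule wardrop_cost_on_support[OF eqm pr(1,3,2)])
    then show "?S = 0" by (simp add: S)
  next
    show "?S \<le> 0" using le u(2) by (simp add: S mult_nonneg_nonpos)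
  qed
qed

lemma ratio_eq_if_common_nontrivial_equation:
  fixes \<alpha> \<beta> x y x' y' :: real
  assumes "\<alpha> \<noteq> 0" "x' \<noteq> 0" "y' \<noteq> 0" "\<alpha> * x + \<beta> * y = 0" "\<alpha> * x' + \<beta> * y' = 0"
  shows "x / x' = y / y'"
proof -
  have "\<alpha> * (x * y' - x' * y) = (\<alpha> * x + \<beta> * y) * y' - (\<alpha> * x' + \<beta> * y') * y"
    by (simp add: algebra_simps)
  then have "x * y' = x' * y" using assms(1,4,5) by simp
  then show ?thesis using assms(2,3) by (simp add: frac_eq_eq mult.commute)
qed

lemma Q_set_ratio_eq:
  assumes "\<psi> \<in> Q_set m z C P q \<Phi> ft" "q \<in> Q_set m z C P q \<Phi> ft" "u < z" "0 < sig_prob m q \<Phi> u"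
    and "a < m" "b < m" "a \<noteq> b" "\<And>s. s < m \<Longrightarrow> s \<noteq> a \<Longrightarrow> s \<noteq> b \<Longrightarrow> \<Phi> u s = 0" "\<Phi> u a \<noteq> 0"
    and "q a \<noteq> 0" "q b \<noteq> 0"
    and "p \<in> P" "r \<in> P" "0 < ft u p" "0 < ft u r" "path_cost C a P (ft u) p \<noteq> path_cost C a P (ft u) r"
  shows "\<psi> a / q a = \<psi> b / q b"
proof -
  define D where "D s = path_cost C s P (ft u) p - path_cost C s P (ft u) r" for s
  have two_points: "(\<Sum>s<m. \<Phi> u s * D s * x s) = \<Phi> u a * D a * x a + \<Phi> u b * D b * x b"
    for x :: "nat \<Rightarrow> real"
    using assms(5-8) by (intro sum_lessThan_two_points) auto
  have "(\<Sum>s<m. \<Phi> u s * D s * x s) = 0" if "x \<in> Q_set m z C P q \<Phi> ft" for x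
    using that assms(3,4,12-15) unfolding Q_set_def D_def mem_Collect_eq by blast
  then have "\<Phi> u a * D a * \<psi> a + \<Phi> u b * D b * \<psi> b = 0" "\<Phi> u a * D a * q a + \<Phi> u b * D b * q b = 0"
    using assms(1,2) by (simp_all add: two_points)
  moreover have "\<Phi> u a * D a \<noteq> 0" using assms(9,16) by (simp add: D_def)
  ultimately show ?thesis
    using ratio_eq_if_common_nontrivial_equation[OF _ assms(10,11)] by blast
qed

lemma constant_along_parent_links:
  assumes "\<And>u. u < m - 1 \<Longrightarrow> parent u \<le> u \<and> x (Suc u) = x (parent u)" "s < m"
  shows "x s = x 0"
  using assms(2)
proof (induction s rule: less_induct)
  case (less s)
  show ?case
  proof (cases s)
    case (Suc u)
    then have "parent u \<le> u" "x s = x (parent u)" using assms(1)[of u] less.prems by auto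
    then show ?thesis using less.IH[of "parent u"] Suc less.prems by simp
  qed simp
qed

lemma simplex_eq_if_ratio_const:
  assumes "\<psi> \<in> simplex m" "q \<in> simplex m" "\<And>s. s < m \<Longrightarrow> 0 < q s" "\<And>s. s < m \<Longrightarrow> \<psi> s / q s = k"
  shows "\<psi> = q"
proof -
  have \<psi>_eq: "\<psi> s = k * q s" if "s < m" for s
    using assms(3,4)[OF that] by (simp add: divide_eq_eq)
  have "1 = (\<Sum>s<m. \<psi> s)" using assms(1) by (simp add: simplex_def)
  also have "\<dots> = (\<Sum>s<m. k * q s)" by (rule sum.cong) (simp_all add: \<psi>_eq)
  also have "\<dots> = k" using assms(2) by (simp add: simplex_def sum_distrib_left[symmetric])
  finally have "k = 1" ..
  show ?thesis
  proof
    fix s show "\<psi> s = q s"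
      using \<psi>_eq \<open>k = 1\<close> assms(1,2) by (cases "s < m") (auto simp: simplex_def)
  qed
qed

definition pair_signal :: "(nat \<Rightarrow> real) \<Rightarrow> real \<Rightarrow> nat \<Rightarrow> nat \<Rightarrow> real \<Rightarrow> nat \<Rightarrow> real" where
  "pair_signal q c a b w s = (if s = a then c * (1 - w) / q a else if s = b then c * w / q b else 0)"

(* Signal u < m - 1 is sent only in the states u + 1 and parent u, has total probability c and
   posterior (1 - w u, w u) on them; the last signal takes the remaining mass. *)
definition tree_scheme ::
    "nat \<Rightarrow> (nat \<Rightarrow> real) \<Rightarrow> real \<Rightarrow> (nat \<Rightarrow> nat) \<Rightarrow> (nat \<Rightarrow> real) \<Rightarrow> nat \<Rightarrow> nat \<Rightarrow> real" where
  "tree_scheme m q c parent w u s =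
     (if u < m - 1 then pair_signal q c (Suc u) (parent u) (w u) s
      else if u = m - 1 then 1 - (\<Sum>v<m - 1. pair_signal q c (Suc v) (parent v) (w v) s)
      else 0)"

lemma pair_signal_nonneg:
  assumes "0 \<le> c" "0 \<le> w" "w \<le> 1" "0 < q a" "0 < q b"
  shows "0 \<le> pair_signal q c a b w s"
  using assms by (simp add: pair_signal_def)

lemma pair_signal_le:
  assumes "0 \<le> c" "0 \<le> w" "w \<le> 1" "0 < q a" "0 < q b" "0 < q s"
  shows "pair_signal q c a b w s \<le> c / q s"
  using assms by (auto simp: pair_signal_def divide_right_mono mult_left_le)

lemma sum_pair_signal_mult:
  assumes "a < m" "b < m" "a \<noteq> b"
  shows "(\<Sum>s<m. pair_signal q c a b w s * Z s) = c * (1 - w) / q a * Z a + c * w / q b * Z b"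
proof -
  have "(\<Sum>s<m. pair_signal q c a b w s * Z s) =
      pair_signal q c a b w a * Z a + pair_signal q c a b w b * Z b"
    using assms by (intro sum_lessThan_two_points) (auto simp: pair_signal_def)
  then show ?thesis using assms(3) by (simp add: pair_signal_def)
qed

locale tree_signalling =
  fixes m :: nat and q :: "nat \<Rightarrow> real" and c :: real and parent :: "nat \<Rightarrow> nat" and w :: "nat \<Rightarrow> real"
  assumes q_pos: "\<And>s. s < m \<Longrightarrow> 0 < q s"
    and c_pos: "0 < c"
    and c_small: "\<And>s. s < m \<Longrightarrow> real (m - 1) * c \<le> q s"
    and parent_le: "\<And>u. u < m - 1 \<Longrightarrow> parent u \<le> u"
    and weight_pos: "\<And>u. u < m - 1 \<Longrightarrow> 0 < w u"
    and weight_less_1: "\<And>u. u < m - 1 \<Longrightarrow> w u < 1"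
begin

lemma signal_states:
  assumes "u < m - 1"
  shows "Suc u < m" "parent u < m" "Suc u \<noteq> parent u"
  using assms parent_le[OF assms] by auto

lemma signalling_scheme: "signalling_scheme m m (tree_scheme m q c parent w)"
proof -
  let ?p = "\<lambda>v s. pair_signal q c (Suc v) (parent v) (w v) s"
  have nonneg: "0 \<le> ?p v s" if "v < m - 1" for v s
    using signal_states[OF that] q_pos c_pos weight_pos[OF that] weight_less_1[OF that]
    by (intro pair_signal_nonneg) auto
  have bound: "(\<Sum>v<m - 1. ?p v s) \<le> 1" if "s < m" for s
  proof -
    have "(\<Sum>v<m - 1. ?p v s) \<le> (\<Sum>v<m - 1. c / q s)"
    proof (rule sum_mono)
      fix v assume "v \<in> {..<m - 1}"
      then show "?p v s \<le> c / q s"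
        using signal_states[of v] q_pos c_pos weight_pos[of v] weight_less_1[of v] that
        by (intro pair_signal_le) auto
    qed
    also have "\<dots> \<le> 1" using c_small[OF that] q_pos[OF that] by simp
    finally show ?thesis .
  qed
  show ?thesis
    unfolding signalling_scheme_def
  proof (intro conjI allI impI)
    fix u s assume "u < m" "s < m"
    then show "0 \<le> tree_scheme m q c parent w u s"
      using nonneg bound by (auto simp: tree_scheme_def)
  next
    fix s assume "s < m"
    then have "{..<m} = insert (m - 1) {..<m - 1}" by auto
    then show "(\<Sum>u<m. tree_scheme m q c parent w u s) = 1"
      by (simp add: tree_scheme_def)
  qed
qed

lemma sig_prob_tree_scheme:
  assumes "u < m - 1"
  shows "sig_prob m q (tree_scheme m q c parent w) u = c"
proof -
  have "sig_prob m q (tree_scheme m q c parent w) u = (\<Sum>s<m. pair_signal q c (Suc u) (parent u) (w u) s * q s)"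
    using assms by (simp add: sig_prob_def tree_scheme_def)
  also have "\<dots> = c * (1 - w u) + c * w u"
    using sum_pair_signal_mult[OF signal_states[OF assms]]
      q_pos[OF signal_states(1)[OF assms]] q_pos[OF signal_states(2)[OF assms]] by simp
  finally show ?thesis by (simp add: algebra_simps)
qed

lemma exp_cost_posterior_tree_scheme:
  assumes "u < m - 1"
  shows "exp_cost m C (posterior m q (tree_scheme m q c parent w) u) P = mixed_cost C P (Suc u) (parent u) (w u)"
proof (intro ext)
  fix f p
  have "exp_cost m C (posterior m q (tree_scheme m q c parent w) u) P f p =
      (\<Sum>s<m. pair_signal q c (Suc u) (parent u) (w u) s * (q s / c * path_cost C s P f p))"
    unfolding exp_cost_def using assms
    by (intro sum.cong) (auto simp: posterior_def sig_prob_tree_scheme tree_scheme_def)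
  also have "\<dots> = c * (1 - w u) / q (Suc u) * (q (Suc u) / c * path_cost C (Suc u) P f p)
      + c * w u / q (parent u) * (q (parent u) / c * path_cost C (parent u) P f p)"
    by (rule sum_pair_signal_mult[OF signal_states[OF assms]])
  also have "\<dots> = mixed_cost C P (Suc u) (parent u) (w u) f p"
    using c_pos q_pos[OF signal_states(1)[OF assms]] q_pos[OF signal_states(2)[OF assms]]
    by (simp add: mixed_cost_def)
  finally show "exp_cost m C (posterior m q (tree_scheme m q c parent w) u) P f p =
      mixed_cost C P (Suc u) (parent u) (w u) f p" .
qed

lemma q_identifying_tree_scheme:
  assumes "q \<in> simplex m"
    and separating: "\<And>u. u < m - 1 \<Longrightarrow> separating_weight C P (Suc u) (parent u) (w u)"
  shows "q_identifying m m C P q (tree_scheme m q c parent w)"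
  unfolding q_identifying_def
proof (intro allI impI)
  let ?\<Phi> = "tree_scheme m q c parent w"
  fix ft assume observed: "\<forall>u<m. 0 < sig_prob m q ?\<Phi> u \<longrightarrow> ft u \<in> WE m C (posterior m q ?\<Phi> u) P"
  have q_in: "q \<in> Q_set m m C P q ?\<Phi> ft" by (rule prior_in_Q_set[OF assms(1) observed])
  have "\<psi> = q" if \<psi>: "\<psi> \<in> Q_set m m C P q ?\<Phi> ft" for \<psi>
  proof -
    have link: "\<psi> (Suc u) / q (Suc u) = \<psi> (parent u) / q (parent u)" if u: "u < m - 1" for u
    proof -
      note states = signal_states[OF u]
      have sig: "0 < sig_prob m q ?\<Phi> u" using sig_prob_tree_scheme[OF u] c_pos by simp
      then have "ft u \<in> WE m C (posterior m q ?\<Phi> u) P" using observed u by simp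
      then have "wardrop P (mixed_cost C P (Suc u) (parent u) (w u)) (ft u)"
        by (simp add: WE_eq_wardrop exp_cost_posterior_tree_scheme[OF u])
      then obtain p r where "p \<in> P" "r \<in> P" "0 < ft u p" "0 < ft u r"
          "path_cost C (Suc u) P (ft u) p \<noteq> path_cost C (Suc u) P (ft u) r"
        using separating[OF u] unfolding separating_weight_def equal_costs_on_support_def by blast
      moreover have "?\<Phi> u (Suc u) \<noteq> 0"
        using u c_pos weight_less_1[OF u] q_pos[OF states(1)] by (simp add: tree_scheme_def pair_signal_def)
      ultimately show ?thesis
        using states u q_pos[OF states(1)] q_pos[OF states(2)]
        by (intro Q_set_ratio_eq[OF \<psi> q_in _ sig]) (auto simp: tree_scheme_def pair_signal_def)
    qed
    have "\<psi> s / q s = \<psi> 0 / q 0" if "s < m" for s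
      using constant_along_parent_links[of m parent "\<lambda>s. \<psi> s / q s", OF _ that] parent_le link by blast
    moreover have "\<psi> \<in> simplex m" using \<psi> by (simp add: Q_set_def)
    ultimately show ?thesis using simplex_eq_if_ratio_const[OF _ assms(1) q_pos] by blast
  qed
  then show "Q_set m m C P q ?\<Phi> ft = {q}" using q_in by blast
qed

end

lemma exists_q_identifying_scheme:
  assumes "q \<in> simplex m" "\<And>s. s < m \<Longrightarrow> 0 < q s"
    and "\<And>u. u < m - 1 \<Longrightarrow> parent u \<le> u \<and> separating_weight C P (Suc u) (parent u) (w u)"
  shows "\<exists>\<Phi>. signalling_scheme m m \<Phi> \<and> q_identifying m m C P q \<Phi>"
proof -
  have "0 < m" using assms(1) by (cases m) (auto simp: simplex_def)
  define c where "c = Min (q ` {..<m}) / real m"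
  have "Min (q ` {..<m}) \<in> q ` {..<m}" using \<open>0 < m\<close> by (intro Min_in) auto
  then have "0 < c" using assms(2) \<open>0 < m\<close> by (auto simp: c_def)
  moreover have "real (m - 1) * c \<le> q s" if "s < m" for s
  proof -
    have "real (m - 1) * c \<le> real m * c" using \<open>0 < c\<close> by (intro mult_right_mono) auto
    also have "\<dots> = Min (q ` {..<m})" using \<open>0 < m\<close> by (simp add: c_def)
    also have "\<dots> \<le> q s" using that by (intro Min_le) auto
    finally show ?thesis .
  qed
  ultimately interpret tree_signalling m q c parent w
    using assms(2,3) by unfold_locales (auto simp: separating_weight_def)
  show ?thesis using signalling_scheme q_identifying_tree_scheme[OF assms(1)] assms(3) by blast
qed

section \<open>Networks\<close>

lemma finite_od_paths:
  assumes "finite E"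
  shows "finite (od_paths E vo vd)"
proof -
  let ?V = "insert vo (snd ` E)"
  have "set vs \<subseteq> ?V" if vs: "vs \<in> od_paths E vo vd" for vs
  proof
    fix x assume "x \<in> set vs"
    then obtain i where i: "i < length vs" "x = vs ! i" by (auto simp: in_set_conv_nth)
    show "x \<in> ?V"
    proof (cases i)
      case 0
      then show ?thesis using vs i by (auto simp: od_paths_def hd_conv_nth)
    next
      case (Suc j)
      then have "(vs ! j, vs ! (j + 1)) \<in> E" using vs i by (auto simp: od_paths_def)
      then show ?thesis using i Suc by force
    qed
  qed
  then have "od_paths E vo vd \<subseteq> {xs. set xs \<subseteq> ?V \<and> distinct xs}"
    by (auto simp: od_paths_def)
  moreover have "finite {xs. set xs \<subseteq> ?V \<and> distinct xs}"
    using assms by (intro finite_subset_distinct) auto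
  ultimately show ?thesis by (rule finite_subset)
qed

lemma edges_of_od_paths_subset: "edges_of (od_paths E vo vd) \<subseteq> E"
proof
  fix e assume "e \<in> edges_of (od_paths E vo vd)"
  then obtain vs n where vs: "vs \<in> od_paths E vo vd" and n: "n < length (tl vs)"
    "e = (vs ! n, tl vs ! n)"
    by (auto simp: edges_of_def path_edges_def in_set_zip)
  then have "(vs ! n, vs ! (n + 1)) \<in> E" unfolding od_paths_def by auto
  then show "e \<in> E" using n by (simp add: nth_tl)
qed

lemma exp_cost_point_mass:
  assumes "s < m"
  shows "exp_cost m C (point_mass s) P = path_cost C s P"
proof (intro ext)
  fix f p
  have "exp_cost m C (point_mass s) P f p = (\<Sum>t<m. if t = s then path_cost C t P f p else 0)"
    unfolding exp_cost_def point_mass_def by (intro sum.cong) auto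
  then show "exp_cost m C (point_mass s) P f p = path_cost C s P f p" using assms by simp
qed

lemma strictly_increasing_costs_od_paths:
  assumes "\<forall>e\<in>E. strict_mono_on {0..} (C s e)"
  shows "strictly_increasing_costs C (od_paths E vo vd) s"
  unfolding strictly_increasing_costs_def
proof
  fix e assume "e \<in> edges_of (od_paths E vo vd)"
  then have "e \<in> E" using edges_of_od_paths_subset ..
  then show "strict_mono_on {0..} (C s e)" using assms by simp
qed

(* States s \<ge> 1 are linked to state 0, or to state 1 if state s has the same equilibria as
   state 0; since the equilibria of states 0 and 1 differ, every link joins different sets. *)
lemma exists_separating_parents:
  assumes "finite P" "\<And>s. s < m \<Longrightarrow> strictly_increasing_costs C P s" "2 \<le> m"
    and "{f. wardrop P (path_cost C 0 P) f} \<noteq> {f. wardrop P (path_cost C 1 P) f}"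
  obtains parent w
  where "\<And>u. u < m - 1 \<Longrightarrow> parent u \<le> u \<and> separating_weight C P (Suc u) (parent u) (w u)"
proof -
  define W where "W s = {f. wardrop P (path_cost C s P) f}" for s
  have "W 0 \<noteq> W 1" using assms(4) by (simp add: W_def)
  define parent :: "nat \<Rightarrow> nat" where "parent u = (if u = 0 \<or> W (Suc u) \<noteq> W 0 then 0 else 1)" for u
  have separating: "\<forall>u\<in>{..<m - 1}. \<exists>w. separating_weight C P (Suc u) (parent u) w"
  proof
    fix u assume "u \<in> {..<m - 1}"
    then have "Suc u < m" "parent u < m" "W (Suc u) \<noteq> W (parent u)"
      using assms(3) \<open>W 0 \<noteq> W 1\<close> by (auto simp: parent_def)
    then show "\<exists>w. separating_weight C P (Suc u) (parent u) w"
      unfolding W_def by (rule separating_weight_exists[OF assms(1) assms(2) assms(2)])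
  qed
  obtain w where "\<forall>u\<in>{..<m - 1}. separating_weight C P (Suc u) (parent u) (w u)"
    using bchoice[OF separating] by blast
  moreover have "parent u \<le> u" for u by (simp add: parent_def)
  ultimately show thesis by (intro that[of parent w]) simp
qed

theorem proposition1:
  fixes E :: "('v \<times> 'v) set" and vo vd :: 'v and m :: nat
    and C :: "nat \<Rightarrow> ('v \<times> 'v) \<Rightarrow> real \<Rightarrow> real" and q :: "nat \<Rightarrow> real"
  assumes "finite E"
    and "2 \<le> m"
    and "\<forall>s<m. \<forall>e\<in>E. continuous_on {0..} (C s e) \<and> strict_mono_on {0..} (C s e)
                      \<and> (\<forall>x\<ge>0. 0 \<le> C s e x)"
    and "q \<in> simplex m"
    and "\<forall>s<m. 0 < q s"
    and "WE m C (point_mass 0) (od_paths E vo vd) \<noteq> WE m C (point_mass 1) (od_paths E vo vd)"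
  shows "\<exists>\<Phi>. signalling_scheme m m \<Phi> \<and> q_identifying m m C (od_paths E vo vd) q \<Phi>"
proof -
  define P where "P = od_paths E vo vd"
  have fin: "finite P" unfolding P_def by (rule finite_od_paths[OF assms(1)])
  have incr: "strictly_increasing_costs C P s" if "s < m" for s
    unfolding P_def using assms(3) that by (blast intro: strictly_increasing_costs_od_paths)
  have "0 < m" "1 < m" using assms(2) by auto
  then have "{f. wardrop P (path_cost C 0 P) f} \<noteq> {f. wardrop P (path_cost C 1 P) f}"
    using assms(6) by (simp add: P_def WE_eq_wardrop exp_cost_point_mass)
  then obtain parent w
    where links: "\<And>u. u < m - 1 \<Longrightarrow> parent u \<le> u \<and> separating_weight C P (Suc u) (parent u) (w u)"
    using exists_separating_parents[OF fin incr assms(2)] by blast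
  show ?thesis
    unfolding P_def[symmetric] by (rule exists_q_identifying_scheme[OF assms(4) _ links]) (use assms(5) in simp)
qed

end
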